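(* Let $n\ge2$ and $n_a,n_b\ge1$ be integers with $n_a\ge n_b$ and $n_a+n_b=n$. (1) If $n_a=n_b=n/2$, then $(n_a,n_b)\in QB(n)$. (2) If $n_a>n_b$, then $(n_a,n_b)\in QB(n)$ if and only if one of the following holds: (i) there exist $k\in\mathbb{N}$ and $p\in\mathbb{N}_{\ge1}$ with $n=2^k(2p+1)$, $n_a=2^k(p+1)$, $n_b=2^kp$; (ii) there exist $k\in\mathbb{N}$, $l\in\mathbb{N}_{\ge2}$, $p\in\mathbb{N}_{\ge1}$ and $t\in\mathbb{N}$ with $0\le t<2^{l-2}$ such that $n=2^k(2^l(2p+1)+2t+1)$, $n_a=2^{k+l}(p+1)$, $n_b=2^k(2^lp+2t+1)$; (iii) there exist $k\in\mathbb{N}$, $l\in\mathbb{N}_{\ge2}$, $p\in\mathbb{N}_{\ge1}$ and $t\in\mathbb{N}$ with $0\le t<2^{l-2}$ such that $n=2^k(2^l(2p+1)-(2t+1))$, $n_a=2^k(2^l(p+1)-(2t+1))$, $n_b=2^{k+l}p$.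
   Context: $\mathbb{N}$ includes $0$; $\mathbb{N}_{\ge m}=\{n\in\mathbb{N}:n\ge m\}$. Bifurcating trees: rooted trees in which every internal node has exactly two children; $\mathcal{T}_n$ is the set of isomorphism classes of bifurcating trees with $n$ leaves. The Colless index is $\mathcal{C}(T)=\sum_{v}|\kappa_T(v_1)-\kappa_T(v_2)|$, summed over internal nodes $v$ with children $v_1,v_2$, where $\kappa_T(w)$ is the number of leaves descending from $w$; $c_n=\min\{\mathcal{C}(T):T\in\mathcal{T}_n\}$. For $n\ge2$, $QB(n)=\{(n_a,n_b)\in\mathbb{N}^2: n_a\ge n_b\ge1,\ n_a+n_b=n,\ c_{n_a}+c_{n_b}+n_a-n_b=c_n\}$. *)

theory Defs
  imports Main
begin

text \<open>Rooted bifurcating trees (plane representatives; the Colless index and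
leaf count are invariant under swapping children, so minimising over plane
trees is the same as minimising over isomorphism classes).\<close>
datatype btree = Leaf | Node btree btree

fun leaves :: "btree \<Rightarrow> nat" where
  "leaves Leaf = 1"
| "leaves (Node l r) = leaves l + leaves r"

fun colless :: "btree \<Rightarrow> nat" where
  "colless Leaf = 0"
| "colless (Node l r) = colless l + colless r
     + nat \<bar>int (leaves l) - int (leaves r)\<bar>"

definition cmin :: "nat \<Rightarrow> nat" where
  "cmin n = (LEAST c. \<exists>T. leaves T = n \<and> colless T = c)"

definition QB :: "nat \<Rightarrow> (nat \<times> nat) set" where
  "QB n = {(na, nb). na \<ge> nb \<and> nb \<ge> 1 \<and> na + nb = n \<and>
                      cmin na + cmin nb + (na - nb) = cmin n}"

end

theory Submission
  imports Defs
begin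

text \<open>The minimal Colless index obeys c(2m) = 2 c(m) and c(2m+1) = c(m) + c(m+1) + 1: the
maximally balanced tree attains this value, and the excess
D(x, y) = c(x) + c(y) + (x - y) - c(x + y) of a split satisfies recursions in the parities of x
and y that write it as a nonnegative combination of excesses of the halved splits, so no tree does
better. Hence (n_a, n_b) \<in> QB(n) iff D(n_a, n_b) = 0. The same recursions show by induction that,
for n_a > n_b, D vanishes exactly when n_b and n_a lie in a common dyadic block
[2^m p, 2^m (p + 1)] with p \<ge> 1 and 2^m \<le> 2 (n_a - n_b), with n_b at its lower or n_a at its
upper end. Writing the distance of the other point to the block end as 2^j (2s + 1) gives the
three families of the statement.\<close>

function min_colless :: "nat \<Rightarrow> nat" where
  "min_colless n =
     (if n \<le> 1 then 0
      else if even n then 2 * min_colless (n div 2)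
      else min_colless (n div 2) + min_colless (n div 2 + 1) + 1)"
  by auto
termination by (relation "measure id") (auto elim: oddE)

declare min_colless.simps [simp del]

lemma min_colless_0 [simp]: "min_colless 0 = 0"
  and min_colless_1 [simp]: "min_colless 1 = 0"
  by (simp_all add: min_colless.simps)

lemma min_colless_double: "min_colless (2 * m) = 2 * min_colless m"
  by (cases "m = 0") (simp_all add: min_colless.simps [of "2 * m"])

lemma min_colless_odd: "1 \<le> m \<Longrightarrow> min_colless (2 * m + 1) = min_colless m + min_colless (m + 1) + 1"
  by (subst min_colless.simps) simp

lemma parity_cases2:
  fixes x y :: nat
  obtains (even_even) a b where "x = 2 * a" "y = 2 * b"
    | (even_odd) a b where "x = 2 * a" "y = 2 * b + 1"
    | (odd_even) a b where "x = 2 * a + 1" "y = 2 * b"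
    | (odd_odd) a b where "x = 2 * a + 1" "y = 2 * b + 1"
  by (metis evenE oddE)

definition split_excess :: "nat \<Rightarrow> nat \<Rightarrow> int" where
  "split_excess x y =
     int (min_colless x) + int (min_colless y) + (int x - int y) - int (min_colless (x + y))"

lemma split_excess_0: "split_excess x 0 = int x"
  by (simp add: split_excess_def)

lemma split_excess_diag: "split_excess x x = 0"
proof -
  have "min_colless (x + x) = 2 * min_colless x"
    by (metis min_colless_double mult_2)
  then show ?thesis by (simp add: split_excess_def)
qed

lemma split_excess_double: "split_excess (2 * a) (2 * b) = 2 * split_excess a b"
  using min_colless_double [of "a + b"] min_colless_double [of a] min_colless_double [of b]
  by (simp add: split_excess_def algebra_simps)

lemma split_excess_even_odd:
  assumes "1 \<le> b"
  shows "split_excess (2 * a) (2 * b + 1) = split_excess a b + split_excess a (b + 1)"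
  using min_colless_odd [of b] min_colless_odd [of "a + b"] min_colless_double [of a] assms
  by (simp add: split_excess_def algebra_simps)

lemma split_excess_even_1:
  assumes "1 \<le> a"
  shows "split_excess (2 * a) 1 = split_excess a 1 + (int a - 1)"
  using min_colless_odd [of a] min_colless_double [of a] assms
  by (simp add: split_excess_def algebra_simps)

lemma split_excess_odd_even:
  assumes "1 \<le> a" "1 \<le> b"
  shows "split_excess (2 * a + 1) (2 * b) = split_excess a b + split_excess (a + 1) b"
  using min_colless_odd [of a] min_colless_odd [of "a + b"] min_colless_double [of b] assms
  by (simp add: split_excess_def algebra_simps)

lemma split_excess_odd_odd:
  assumes "1 \<le> a" "1 \<le> b"
  shows "split_excess (2 * a + 1) (2 * b + 1) = split_excess (a + 1) b + split_excess a (b + 1) + 2"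
  using min_colless_odd [of a] min_colless_odd [of b] min_colless_double [of "a + b + 1"] assms
  by (simp add: split_excess_def algebra_simps)

lemma split_excess_odd_1:
  assumes "1 \<le> a"
  shows "split_excess (2 * a + 1) 1 = split_excess a 1 + int a + 2"
  using min_colless_odd [of a] min_colless_double [of "a + 1"] assms
  by (simp add: split_excess_def algebra_simps)

lemma split_excess_nonneg: "y \<le> x \<Longrightarrow> 0 \<le> split_excess x y"
proof (induction "x + y" arbitrary: x y rule: less_induct)
  case less
  show ?case
  proof (cases "y = 0 \<or> x = y")
    case True
    then show ?thesis using split_excess_0 split_excess_diag by auto
  next
    case False
    with less.prems have "1 \<le> y" "y < x" by auto
    then show ?thesis
    proof (cases x y rule: parity_cases2)
      case (even_even a b)
      then show ?thesis using less.hyps [of a b] \<open>y < x\<close> split_excess_double by simp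
    next
      case (even_odd a b)
      then show ?thesis
        using less.hyps [of a 1] less.hyps [of a b] less.hyps [of a "b + 1"] \<open>y < x\<close>
          split_excess_even_1 [of a] split_excess_even_odd [of b a]
        by (cases "b = 0") simp_all
    next
      case (odd_even a b)
      then show ?thesis
        using less.hyps [of a b] less.hyps [of "a + 1" b] \<open>1 \<le> y\<close> \<open>y < x\<close>
          split_excess_odd_even [of a b] by simp
    next
      case (odd_odd a b)
      then show ?thesis
        using less.hyps [of a 1] less.hyps [of "a + 1" b] less.hyps [of a "b + 1"] \<open>y < x\<close>
          split_excess_odd_1 [of a] split_excess_odd_odd [of a b]
        by (cases "b = 0") simp_all
    qed
  qed
qed

corollary min_colless_add_le:
  "int (min_colless (x + y)) \<le> int (min_colless x) + int (min_colless y) + \<bar>int x - int y\<bar>"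
  using split_excess_nonneg [of y x] split_excess_nonneg [of x y]
  by (cases "y \<le> x") (auto simp: split_excess_def add.commute)

lemma min_colless_le_colless: "min_colless (leaves T) \<le> colless T"
proof (induction T)
  case (Node l r)
  have "int (min_colless (leaves l + leaves r))
      \<le> int (min_colless (leaves l)) + int (min_colless (leaves r)) + \<bar>int (leaves l) - int (leaves r)\<bar>"
    by (rule min_colless_add_le)
  also have "\<dots> \<le> int (colless l) + int (colless r) + \<bar>int (leaves l) - int (leaves r)\<bar>"
    using Node.IH by simp
  finally show ?case by simp
qed (simp add: min_colless.simps)

function balanced_tree :: "nat \<Rightarrow> btree" where
  "balanced_tree n =
     (if n \<le> 1 then Leaf else Node (balanced_tree ((n + 1) div 2)) (balanced_tree (n div 2)))"
  by auto
termination by (relation "measure id") auto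

declare balanced_tree.simps [simp del]

lemma balanced_tree_leaves_colless:
  "1 \<le> n \<Longrightarrow> leaves (balanced_tree n) = n \<and> colless (balanced_tree n) = min_colless n"
proof (induction n rule: less_induct)
  case (less n)
  show ?case
  proof (cases "even n")
    case True
    then obtain m where m: "n = 2 * m" ..
    with less have "1 \<le> m" "m < n" by auto
    with m less.IH [of m] show ?thesis
      by (simp add: balanced_tree.simps [of "2 * m"] min_colless_double)
  next
    case False
    then obtain m where m: "n = 2 * m + 1" by (rule oddE)
    show ?thesis
    proof (cases "m = 0")
      case False
      then have "balanced_tree n = Node (balanced_tree (m + 1)) (balanced_tree m)"
        by (subst balanced_tree.simps) (simp add: m)
      with False m less.IH [of m] less.IH [of "m + 1"] show ?thesis
        using min_colless_odd [of m] by simp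
    qed (use m in \<open>simp add: balanced_tree.simps min_colless.simps\<close>)
  qed
qed

lemma cmin_eq_min_colless: "1 \<le> n \<Longrightarrow> cmin n = min_colless n"
  unfolding cmin_def
proof (rule Least_equality)
  show "1 \<le> n \<Longrightarrow> \<exists>T. leaves T = n \<and> colless T = min_colless n"
    using balanced_tree_leaves_colless by blast
qed (use min_colless_le_colless in blast)

lemma QB_iff_split_excess_0:
  assumes "1 \<le> nb" "nb \<le> na" "na + nb = n"
  shows "(na, nb) \<in> QB n \<longleftrightarrow> split_excess na nb = 0"
  using assms by (auto simp: QB_def split_excess_def cmin_eq_min_colless)

definition dyadic_pair :: "nat \<Rightarrow> nat \<Rightarrow> bool" where
  "dyadic_pair x y \<longleftrightarrow> (\<exists>m p. 1 \<le> p \<and> 2 ^ m \<le> 2 * (x - y) \<and>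
     (y = 2 ^ m * p \<and> x \<le> 2 ^ m * (p + 1) \<or> x = 2 ^ m * (p + 1) \<and> 2 ^ m * p \<le> y))"

lemma dyadic_pair_lowI:
  "1 \<le> p \<Longrightarrow> y = 2 ^ m * p \<Longrightarrow> x \<le> 2 ^ m * (p + 1) \<Longrightarrow> 2 ^ m \<le> 2 * (x - y) \<Longrightarrow>
   dyadic_pair x y"
  unfolding dyadic_pair_def by blast

lemma dyadic_pair_highI:
  "1 \<le> p \<Longrightarrow> x = 2 ^ m * (p + 1) \<Longrightarrow> 2 ^ m * p \<le> y \<Longrightarrow> 2 ^ m \<le> 2 * (x - y) \<Longrightarrow>
   dyadic_pair x y"
  unfolding dyadic_pair_def by blast

lemma dyadic_pairE:
  assumes "dyadic_pair x y"
  obtains (low) m p where "1 \<le> p" "2 ^ m \<le> 2 * (x - y)" "y = 2 ^ m * p" "x \<le> 2 ^ m * (p + 1)"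
    | (high) m p where "1 \<le> p" "2 ^ m \<le> 2 * (x - y)" "x = 2 ^ m * (p + 1)" "2 ^ m * p \<le> y"
  using assms unfolding dyadic_pair_def by blast

lemma pow2_dvd_odd: "(2::nat) ^ m dvd 2 * b + 1 \<Longrightarrow> m = 0"
  by (cases m) (auto dest: dvd_mult_left)

lemma dyadic_pair_Suc: "1 \<le> y \<Longrightarrow> dyadic_pair (y + 1) y"
  by (rule dyadic_pair_lowI [of y _ 0]) simp_all

lemma dyadic_pair_double: "dyadic_pair (2 * x) (2 * y) \<longleftrightarrow> dyadic_pair x y"
proof
  assume "dyadic_pair (2 * x) (2 * y)"
  then show "dyadic_pair x y"
  proof (cases rule: dyadic_pairE)
    case (low m p)
    then obtain M where "m = Suc M" by (cases m) auto
    with low show ?thesis by (intro dyadic_pair_lowI [of p _ M]) auto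
  next
    case (high m p)
    then obtain M where "m = Suc M" by (cases m) (auto, presburger)
    with high show ?thesis by (intro dyadic_pair_highI [of p _ M]) auto
  qed
next
  assume "dyadic_pair x y"
  then show "dyadic_pair (2 * x) (2 * y)"
  proof (cases rule: dyadic_pairE)
    case (low m p)
    then show ?thesis by (intro dyadic_pair_lowI [of p _ "Suc m"]) auto
  next
    case (high m p)
    then show ?thesis by (intro dyadic_pair_highI [of p _ "Suc m"]) auto
  qed
qed

lemma not_dyadic_pair_odd_odd:
  assumes "b < a"
  shows "\<not> dyadic_pair (2 * a + 1) (2 * b + 1)"
proof
  assume "dyadic_pair (2 * a + 1) (2 * b + 1)"
  then show False
  proof (cases rule: dyadic_pairE)
    case (low m p)
    then have "m = 0" using pow2_dvd_odd [of m b] by simp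
    with low \<open>b < a\<close> show False by simp
  next
    case (high m p)
    then have "m = 0" using pow2_dvd_odd [of m a] by simp
    with high \<open>b < a\<close> show False by simp
  qed
qed

lemma dyadic_pair_even_1: "1 \<le> a \<Longrightarrow> dyadic_pair (2 * a) 1 \<longleftrightarrow> a = 1"
proof
  assume "dyadic_pair (2 * a) 1"
  then show "a = 1"
  proof (cases rule: dyadic_pairE)
    case (low m p)
    then show ?thesis by (cases m) auto
  next
    case (high m p)
    then have "2 ^ m \<le> (2::nat) ^ 0"
      by (metis le_trans mult.right_neutral mult_le_mono2 power_0)
    then have "m = 0"
      using power_le_imp_le_exp [of "2::nat" m 0] by simp
    with high show ?thesis by simp
  qed
qed (auto intro: dyadic_pair_lowI [of 1 _ 0])

lemma dyadic_pair_imp_less: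
  assumes "dyadic_pair x y"
  shows "1 \<le> y \<and> y < x"
  using assms
proof (cases rule: dyadic_pairE)
  case (low m p)
  moreover have "1 \<le> (2::nat) ^ m" "1 \<le> 2 ^ m * p" using low(1) by simp_all
  ultimately show ?thesis by linarith
next
  case (high m p)
  moreover have "1 \<le> (2::nat) ^ m" "1 \<le> 2 ^ m * p" using high(1) by simp_all
  ultimately show ?thesis by linarith
qed

lemma dyadic_pair_even_oddD:
  assumes "b + 2 \<le> a" "dyadic_pair (2 * a) (2 * b + 1)"
  shows "dyadic_pair a b \<and> dyadic_pair a (b + 1)"
proof -
  obtain M p where Mp: "1 \<le> p" "a = 2 ^ M * (p + 1)" "2 ^ M * p \<le> b" "2 ^ M < 2 * (a - b)"
    using assms(2)
  proof (cases rule: dyadic_pairE)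
    case (low m p)
    then have "m = 0" using pow2_dvd_odd [of m b] by simp
    with low assms(1) show ?thesis by simp
  next
    case (high m p)
    with assms(1) obtain M where M: "m = Suc M" by (cases m) auto
    have "2 * 2 ^ M \<le> 2 * (2 * a - (2 * b + 1))" "2 * a = 2 * (2 ^ M * (p + 1))"
      "2 * (2 ^ M * p) \<le> 2 * b + 1"
      using high(2-4) unfolding M power_Suc mult.assoc .
    with assms(1) have "a = 2 ^ M * (p + 1)" "2 ^ M * p \<le> b" "2 ^ M < 2 * (a - b)"
      by linarith+
    with high(1) show ?thesis by (rule that)
  qed
  moreover have "2 ^ M \<le> 2 * (a - (b + 1))"
    using Mp(4) assms(1) by (cases M) auto
  ultimately show ?thesis
    by (auto intro: dyadic_pair_highI [of p _ M])
qed

lemma dyadic_pair_even_oddI: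
  assumes "b + 2 \<le> a" "dyadic_pair a b" "dyadic_pair a (b + 1)"
  shows "dyadic_pair (2 * a) (2 * b + 1)"
proof -
  have upper: "dyadic_pair (2 * a) (2 * b + 1)"
    if "1 \<le> p" "a = 2 ^ M * (p + 1)" "2 ^ M * p \<le> b" "2 ^ M < 2 * (a - b)" for M p
    using that by (intro dyadic_pair_highI [of p _ "Suc M"]) auto
  have gap_2: ?thesis if "b = 2 * c" "a = b + 2" for c
    using that dyadic_pair_imp_less [OF assms(2)] upper [of c 1] by simp
  from assms(2) show ?thesis
  proof (cases rule: dyadic_pairE)
    case (high m p)
    show ?thesis
    proof (cases "2 ^ m < 2 * (a - b)")
      case False
      with high(2) have "2 ^ m = 2 * (a - b)" by linarith
      moreover from this assms(1) obtain M where M: "m = Suc M" by (cases m) simp_all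
      ultimately have "2 ^ M = a - b" by simp
      moreover have "a = 2 ^ M * (2 * p + 1 + 1)"
        using high(3) unfolding M by simp
      ultimately show ?thesis
        using high(1) assms(1) by (intro upper [of "2 * p + 1" M]) (simp_all add: algebra_simps)
    qed (use high upper in blast)
  next
    case (low m1 p1)
    with assms(1) obtain M1 where "m1 = Suc M1" by (cases m1) auto
    with low obtain c where c: "b = 2 * c" by auto
    from assms(3) show ?thesis
    proof (cases rule: dyadic_pairE)
      case (low m2 p2)
      then have "m2 = 0" using pow2_dvd_odd [of m2 c] c by simp
      with low c show ?thesis by (intro gap_2 [of c]) auto
    next
      case (high m2 p2)
      show ?thesis
      proof (cases "2 ^ m2 * p2 \<le> b")
        case False
        with high c have "2 * c + 1 = 2 ^ m2 * p2" by linarith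
        then have "m2 = 0" using pow2_dvd_odd [of m2 c] by simp
        with high c show ?thesis by (intro gap_2 [of c]) auto
      next
        case True
        have "2 ^ m2 < 2 * (a - b)"
          using high(2) assms(1) by linarith
        with high(1,3) True show ?thesis by (rule upper)
      qed
    qed
  qed
qed

lemma dyadic_pair_even_odd_iff:
  assumes "1 \<le> b" "b < a"
  shows "dyadic_pair (2 * a) (2 * b + 1) \<longleftrightarrow> dyadic_pair a b \<and> (a = b + 1 \<or> dyadic_pair a (b + 1))"
proof (cases "a = b + 1")
  case True
  then show ?thesis
    using assms dyadic_pair_Suc [of b] dyadic_pair_Suc [of "2 * b + 1"] by simp
next
  case False
  with assms have "b + 2 \<le> a" by simp
  with False show ?thesis
    using dyadic_pair_even_oddD [OF \<open>b + 2 \<le> a\<close>] dyadic_pair_even_oddI [OF \<open>b + 2 \<le> a\<close>] by blast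
qed

lemma dyadic_pair_odd_evenD:
  assumes "b < a" "dyadic_pair (2 * a + 1) (2 * b)"
  shows "dyadic_pair a b \<and> dyadic_pair (a + 1) b"
proof -
  obtain M p where Mp: "1 \<le> p" "b = 2 ^ M * p" "a + 1 \<le> 2 ^ M * (p + 1)" "2 ^ M \<le> 2 * (a - b) + 1"
    using assms(2)
  proof (cases rule: dyadic_pairE)
    case (high m p)
    then have "m = 0" using pow2_dvd_odd [of m a] by simp
    with high assms(1) show ?thesis by simp
  next
    case (low m p)
    with assms(1) obtain M where M: "m = Suc M" by (cases m) auto
    have "2 * 2 ^ M \<le> 2 * (2 * a + 1 - 2 * b)" "2 * b = 2 * (2 ^ M * p)"
      "2 * a + 1 \<le> 2 * (2 ^ M * (p + 1))"
      using low(2-4) unfolding M power_Suc mult.assoc .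
    with assms(1) have "b = 2 ^ M * p" "a + 1 \<le> 2 ^ M * (p + 1)" "2 ^ M \<le> 2 * (a - b) + 1"
      by linarith+
    with low(1) show ?thesis by (rule that)
  qed
  moreover have "2 ^ M \<le> 2 * (a - b)"
    using Mp(4) assms(1) by (cases M) auto
  ultimately show ?thesis
    by (auto intro: dyadic_pair_lowI [of p _ M])
qed

lemma dyadic_pair_odd_evenI:
  assumes "b < a" "dyadic_pair a b" "dyadic_pair (a + 1) b"
  shows "dyadic_pair (2 * a + 1) (2 * b)"
proof -
  have lower: "dyadic_pair (2 * a + 1) (2 * b)"
    if "1 \<le> p" "b = 2 ^ M * p" "a + 1 \<le> 2 ^ M * (p + 1)" "2 ^ M \<le> 2 * (a - b) + 1" for M p
    using that assms(1) by (intro dyadic_pair_lowI [of p _ "Suc M"]) auto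
  have gap_1: ?thesis if "b = 2 * c" "a = b + 1" for c
    using that dyadic_pair_imp_less [OF assms(2)] lower [of c 1] by simp
  from assms(3) show ?thesis
  proof (cases rule: dyadic_pairE)
    case (low m p)
    show ?thesis
    proof (cases "2 ^ m \<le> 2 * (a - b) + 1")
      case False
      with low(2) assms(1) have "2 ^ m = 2 * (a - b + 1)" by arith
      moreover from this obtain M where M: "m = Suc M" by (cases m) simp_all
      ultimately have "2 ^ M = a - b + 1" by simp
      moreover have "b = 2 ^ M * (2 * p)" "2 ^ M * (2 * p + 1) = 2 ^ M * (2 * p) + 2 ^ M"
        using low(3) unfolding M by (simp_all add: algebra_simps)
      ultimately show ?thesis
        using low(1) assms(1) by (intro lower [of "2 * p" M]) linarith+
    qed (use low lower in blast)
  next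
    case (high m2 p2)
    with assms(1) obtain M2 where "m2 = Suc M2" by (cases m2) auto
    with high(3) have "a + 1 = 2 * (2 ^ M2 * (p2 + 1))" by simp
    then obtain c where c: "a = 2 * c + 1"
      by (intro that [of "2 ^ M2 * (p2 + 1) - 1"]) linarith
    have "a = b + 1 \<and> even b \<or> ?thesis"
      using assms(2)
    proof (cases rule: dyadic_pairE)
      case (low m1 p1)
      show ?thesis
      proof (cases "a + 1 \<le> 2 ^ m1 * (p1 + 1)")
        case False
        with low(4) c have "2 * c + 1 = 2 ^ m1 * (p1 + 1)" by linarith
        then have "m1 = 0" using pow2_dvd_odd [of m1 c] by simp
        with low(3,4) assms(1) c have "b = 2 * c" by simp
        with c show ?thesis by simp
      qed (use low lower in auto)
    next
      case (high m1 p1)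
      then have "m1 = 0" using pow2_dvd_odd [of m1 c] c by simp
      with high(3,4) assms(1) c have "b = 2 * c" by simp
      with c show ?thesis by simp
    qed
    then show ?thesis using gap_1 by (auto elim: evenE)
  qed
qed

lemma dyadic_pair_odd_even_iff:
  assumes "1 \<le> b" "b \<le> a"
  shows "dyadic_pair (2 * a + 1) (2 * b) \<longleftrightarrow> (a = b \<or> dyadic_pair a b) \<and> dyadic_pair (a + 1) b"
proof (cases "a = b")
  case True
  then show ?thesis
    using assms dyadic_pair_Suc [of b] dyadic_pair_Suc [of "2 * b"] by simp
next
  case False
  with assms have "b < a" by simp
  with False show ?thesis
    using dyadic_pair_odd_evenD [OF \<open>b < a\<close>] dyadic_pair_odd_evenI [OF \<open>b < a\<close>] by blast
qed

lemma split_excess_pos_odd_odd: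
  assumes "b < a"
  shows "0 < split_excess (2 * a + 1) (2 * b + 1)"
proof (cases "b = 0")
  case True
  with assms show ?thesis
    using split_excess_nonneg [of 1 a] split_excess_odd_1 [of a] by simp
next
  case False
  with assms show ?thesis
    using split_excess_nonneg [of b "a + 1"] split_excess_nonneg [of "b + 1" a]
      split_excess_odd_odd [of a b] by simp
qed

lemma split_excess_even_1_eq_0_iff:
  assumes "1 \<le> a"
  shows "split_excess (2 * a) 1 = 0 \<longleftrightarrow> a = 1"
  using assms split_excess_even_1 [of a] split_excess_nonneg [of 1 a] split_excess_diag [of 1]
  by auto

lemma split_excess_eq_0_iff:
  "1 \<le> y \<Longrightarrow> y \<le> x \<Longrightarrow> split_excess x y = 0 \<longleftrightarrow> x = y \<or> dyadic_pair x y"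
proof (induction "x + y" arbitrary: x y rule: less_induct)
  case less
  show ?case
  proof (cases "x = y")
    case True
    then show ?thesis using split_excess_diag by simp
  next
    case False
    with less.prems have "y < x" by simp
    then show ?thesis
    proof (cases x y rule: parity_cases2)
      case (even_even a b)
      with less \<open>y < x\<close> show ?thesis
        using less.hyps [of a b] split_excess_double [of a b] dyadic_pair_double [of a b] by simp
    next
      case (even_odd a b)
      show ?thesis
      proof (cases "b = 0")
        case True
        with even_odd \<open>y < x\<close> show ?thesis
          using split_excess_even_1_eq_0_iff [of a] dyadic_pair_even_1 [of a] by simp
      next
        case False
        with even_odd \<open>y < x\<close> show ?thesis
          using less.hyps [of a b] less.hyps [of a "b + 1"] dyadic_pair_even_odd_iff [of b a]
            split_excess_even_odd [of b a] split_excess_nonneg [of b a] split_excess_nonneg [of "b + 1" a]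
          by (simp add: add_nonneg_eq_0_iff)
      qed
    next
      case (odd_even a b)
      with less.prems \<open>y < x\<close> show ?thesis
        using less.hyps [of a b] less.hyps [of "a + 1" b] dyadic_pair_odd_even_iff [of b a]
          split_excess_odd_even [of a b] split_excess_nonneg [of b a] split_excess_nonneg [of b "a + 1"]
        by (simp add: add_nonneg_eq_0_iff)
    next
      case (odd_odd a b)
      with \<open>y < x\<close> show ?thesis
        using split_excess_pos_odd_odd [of b a] not_dyadic_pair_odd_odd [of b a] by simp
    qed
  qed
qed

definition qb_family :: "nat \<Rightarrow> nat \<Rightarrow> nat \<Rightarrow> bool" where
  "qb_family n na nb \<longleftrightarrow>
     (\<exists>k p. p \<ge> 1 \<and> n = 2^k * (2*p + 1) \<and> na = 2^k * (p + 1) \<and> nb = 2^k * p)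
   \<or> (\<exists>k l p t. l \<ge> 2 \<and> p \<ge> 1 \<and> t < 2^(l-2) \<and>
         n = 2^k * (2^l * (2*p + 1) + 2*t + 1) \<and>
         na = 2^(k+l) * (p + 1) \<and> nb = 2^k * (2^l * p + 2*t + 1))
   \<or> (\<exists>k l p t. l \<ge> 2 \<and> p \<ge> 1 \<and> t < 2^(l-2) \<and>
         n = 2^k * (2^l * (2*p + 1) - (2*t + 1)) \<and>
         na = 2^k * (2^l * (p + 1) - (2*t + 1)) \<and> nb = 2^(k+l) * p)"

lemma pow2_times_odd_exists: "0 < (r::nat) \<Longrightarrow> \<exists>j s. r = 2 ^ j * (2 * s + 1)"
proof (induction r rule: less_induct)
  case (less r)
  show ?case
  proof (cases "even r")
    case True
    then obtain r' where r': "r = 2 * r'" ..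
    with less.prems have "r' < r" "0 < r'" by auto
    then obtain j s where "r' = 2 ^ j * (2 * s + 1)" using less.IH by blast
    with r' have "r = 2 ^ Suc j * (2 * s + 1)" by simp
    then show ?thesis by blast
  next
    case False
    then obtain s where "r = 2 ^ 0 * (2 * s + 1)" by (auto elim: oddE)
    then show ?thesis by blast
  qed
qed

lemma less_pow2_minus_2_iff:
  assumes "2 \<le> l"
  shows "s < 2 ^ (l - 2) \<longleftrightarrow> 2 * (2 * s + 1) < (2::nat) ^ l"
proof -
  obtain q where "l = q + 2"
    using assms by (intro that [of "l - 2"]) simp
  then show ?thesis
    by (simp add: power_add) linarith
qed

lemma dyadic_remainder_cases:
  fixes r :: nat
  assumes "2 * r \<le> 2 ^ m"
  obtains "r = 0"
    | M where "m = Suc M" "r = 2 ^ M"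
    | j l s where "m = j + l" "2 \<le> l" "s < 2 ^ (l - 2)" "r = 2 ^ j * (2 * s + 1)"
proof (cases "r = 0 \<or> 2 * r = 2 ^ m")
  case True
  then show ?thesis
    using that(1,2) by (cases m) auto
next
  case False
  then obtain j s where r: "r = 2 ^ j * (2 * s + 1)"
    using pow2_times_odd_exists by blast
  with False assms have "2 ^ j * (2 * (2 * s + 1)) < 2 ^ m" by simp
  then have "j + 2 \<le> m"
    using power_strict_increasing_iff [of "2::nat" "j + 1" m] by simp
  then obtain l where l: "m = j + l" "2 \<le> l"
    by (intro that [of "m - j"]) auto
  with \<open>2 ^ j * (2 * (2 * s + 1)) < 2 ^ m\<close> have "2 ^ j * (2 * (2 * s + 1)) < 2 ^ j * (2::nat) ^ l"
    by (simp add: power_add)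
  then have "2 * (2 * s + 1) < (2::nat) ^ l"
    by (simp only: mult_less_cancel1)
  with l r show ?thesis
    using that(3) less_pow2_minus_2_iff by blast
qed

lemma qb_family_of_lower_end:
  assumes "1 \<le> p" "nb = 2 ^ m * p" "na \<le> 2 ^ m * (p + 1)" "2 ^ m \<le> 2 * (na - nb)"
  shows "qb_family (na + nb) na nb"
proof -
  define r where "r = 2 ^ m * (p + 1) - na"
  have na: "na + r = 2 ^ m * (p + 1)"
    using assms(3) by (simp add: r_def)
  have r: "2 * r \<le> 2 ^ m"
  proof -
    have "2 ^ m * (p + 1) = 2 ^ m * p + 2 ^ m" "0 < (2::nat) ^ m" by simp_all
    with assms(2,4) na show ?thesis by linarith
  qed
  from r show ?thesis
  proof (cases rule: dyadic_remainder_cases)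
    case 1
    with assms(1,2) na show ?thesis
      unfolding qb_family_def by (intro disjI1 exI [of _ m] exI [of _ p]) (simp add: algebra_simps)
  next
    case (2 M)
    with assms(1,2) na show ?thesis
      unfolding qb_family_def by (intro disjI1 exI [of _ M] exI [of _ "2 * p"]) (simp add: algebra_simps)
  next
    case (3 j l s)
    have "2 * s + 1 \<le> 2 ^ l"
      using less_pow2_minus_2_iff [of l s] 3 by simp
    then have "na = 2 ^ j * (2 ^ l * (p + 1) - (2 * s + 1))"
      using na 3 by (simp add: diff_mult_distrib2 power_add algebra_simps)
    moreover have "na + nb = 2 ^ j * (2 ^ l * (2 * p + 1) - (2 * s + 1))"
      using na 3 assms(2) \<open>2 * s + 1 \<le> 2 ^ l\<close> by (simp add: diff_mult_distrib2 power_add algebra_simps)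
    ultimately show ?thesis
      using 3 assms(1,2) unfolding qb_family_def by blast
  qed
qed

lemma qb_family_of_upper_end:
  assumes "1 \<le> p" "na = 2 ^ m * (p + 1)" "2 ^ m * p \<le> nb" "2 ^ m \<le> 2 * (na - nb)"
  shows "qb_family (na + nb) na nb"
proof -
  define r where "r = nb - 2 ^ m * p"
  have nb: "nb = 2 ^ m * p + r"
    using assms(3) by (simp add: r_def)
  have r: "2 * r \<le> 2 ^ m"
  proof -
    have "2 ^ m * (p + 1) = 2 ^ m * p + 2 ^ m" "0 < (2::nat) ^ m" by simp_all
    with assms(2,4) nb show ?thesis by linarith
  qed
  from r show ?thesis
  proof (cases rule: dyadic_remainder_cases)
    case 1
    with assms(1,2) nb show ?thesis
      unfolding qb_family_def by (intro disjI1 exI [of _ m] exI [of _ p]) (simp add: algebra_simps)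
  next
    case (2 M)
    with assms(1,2) nb show ?thesis
      unfolding qb_family_def by (intro disjI1 exI [of _ M] exI [of _ "2 * p + 1"]) (simp add: algebra_simps)
  next
    case (3 j l s)
    with assms(1,2) nb show ?thesis
      unfolding qb_family_def
      by (intro disjI2 disjI1 exI [of _ j] exI [of _ l] exI [of _ p] exI [of _ s])
        (simp add: power_add algebra_simps)
  qed
qed

lemma qb_family_of_dyadic_pair: "dyadic_pair na nb \<Longrightarrow> qb_family (na + nb) na nb"
  by (erule dyadic_pairE) (simp_all add: qb_family_of_lower_end qb_family_of_upper_end)

lemma pow2_times_double_odd_le:
  assumes "2 \<le> l" "t < 2 ^ (l - 2)"
  shows "2 * (2 ^ k * (2 * t + 1)) \<le> 2 ^ k * (2::nat) ^ l"
proof -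
  have "2 * (2 * t + 1) \<le> (2::nat) ^ l"
    using less_pow2_minus_2_iff [of l t] assms by simp
  then have "2 ^ k * (2 * (2 * t + 1)) \<le> 2 ^ k * (2::nat) ^ l"
    by (rule mult_le_mono2)
  then show ?thesis by (simp add: mult.left_commute)
qed

lemma dyadic_pair_of_qb_family:
  assumes "qb_family n na nb"
  shows "dyadic_pair na nb"
  using assms unfolding qb_family_def
proof (elim disjE exE conjE)
  fix k p
  assume "p \<ge> 1" "na = 2 ^ k * (p + 1)" "nb = 2 ^ k * p"
  then show ?thesis by (intro dyadic_pair_lowI [of p _ k]) simp_all
next
  fix k l p t
  assume lt: "l \<ge> 2" "p \<ge> 1" "t < 2 ^ (l - 2)"
    and "na = 2 ^ (k + l) * (p + 1)" "nb = 2 ^ k * (2 ^ l * p + 2 * t + 1)"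
  then have "nb = 2 ^ k * 2 ^ l * p + 2 ^ k * (2 * t + 1)" "na = 2 ^ k * 2 ^ l * p + 2 ^ k * 2 ^ l"
    by (simp_all add: power_add algebra_simps)
  with pow2_times_double_odd_le [OF lt(1,3), of k] show ?thesis
    unfolding power_add by (intro dyadic_pair_highI [of p _ "k + l"]) (use lt in \<open>simp_all add: power_add\<close>)
next
  fix k l p t
  assume lt: "l \<ge> 2" "p \<ge> 1" "t < 2 ^ (l - 2)"
    and "na = 2 ^ k * (2 ^ l * (p + 1) - (2 * t + 1))" "nb = 2 ^ (k + l) * p"
  then have "na = 2 ^ k * 2 ^ l * p + 2 ^ k * 2 ^ l - 2 ^ k * (2 * t + 1)" "nb = 2 ^ k * 2 ^ l * p"
    by (simp_all add: diff_mult_distrib2 power_add algebra_simps)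
  with pow2_times_double_odd_le [OF lt(1,3), of k] show ?thesis
    unfolding power_add by (intro dyadic_pair_lowI [of p _ "k + l"]) (use lt in \<open>simp_all add: power_add\<close>)
qed

theorem proposition2:
  fixes n na nb :: nat
  assumes "n \<ge> 2" and "na \<ge> 1" and "nb \<ge> 1" and "na \<ge> nb" and "na + nb = n"
  shows "(na = nb \<longrightarrow> (na, nb) \<in> QB n) \<and>
         (na > nb \<longrightarrow>
            ((na, nb) \<in> QB n \<longleftrightarrow>
               (\<exists>k p. p \<ge> 1 \<and> n = 2^k * (2*p + 1) \<and> na = 2^k * (p + 1) \<and> nb = 2^k * p)
             \<or> (\<exists>k l p t. l \<ge> 2 \<and> p \<ge> 1 \<and> t < 2^(l-2) \<and>
                   n = 2^k * (2^l * (2*p + 1) + 2*t + 1) \<and>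
                   na = 2^(k+l) * (p + 1) \<and> nb = 2^k * (2^l * p + 2*t + 1))
             \<or> (\<exists>k l p t. l \<ge> 2 \<and> p \<ge> 1 \<and> t < 2^(l-2) \<and>
                   n = 2^k * (2^l * (2*p + 1) - (2*t + 1)) \<and>
                   na = 2^k * (2^l * (p + 1) - (2*t + 1)) \<and> nb = 2^(k+l) * p)))"
proof -
  have QB: "(na, nb) \<in> QB n \<longleftrightarrow> na = nb \<or> dyadic_pair na nb"
    using assms QB_iff_split_excess_0 split_excess_eq_0_iff by simp
  have "(na, nb) \<in> QB n \<longleftrightarrow> qb_family n na nb" if "nb < na"
    using that QB assms(5) qb_family_of_dyadic_pair dyadic_pair_of_qb_family by auto
  with QB show ?thesis
    unfolding qb_family_def by auto
qed

end
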